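(* Let $P=(x_i,y_i)_{i=1}^k$ be point pairs in $\mathbb P^2\times\mathbb P^2$, let $Z$ be the $k\times 9$ matrix with rows $x_i^\top\otimes y_i^\top$, and let $\mathcal N_Z\subset\mathbb P(\mathbb C^{3\times3})$ be its projective nullspace. Suppose $\mathcal N_Z$ contains a generic line $\ell$, passing through the three rank-two matrices $F_1,F_2,F_3$. Then for every $j\in\{1,2,3\}$ there is no index $i$ with both $y_i^\top F_j=0$ and $F_jx_i=0$.
   Context: Work over $\mathbb C$; identify $\mathbb C^{3\times3}$ with $\mathbb C^9$ by column-stacking so that $(x^\top\otimes y^\top)\operatorname{vec}(M)=y^\top Mx$. A line in $\mathbb P(\mathbb C^{3\times3})$ is generic if it contains exactly three rank-two matrices. *)

theory Defs
  imports "HOL-Analysis.Analysis"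
begin

text \<open>Points of P^2 are represented by nonzero vectors in complex^3; 3x3 matrices are complex^3^3
  (row index first: M $ a $ b is the entry in row a, column b).\<close>

definition smat :: "complex \<Rightarrow> complex^3^3 \<Rightarrow> complex^3^3" where
  "smat c M = (\<chi> i j. c * M $ i $ j)"

text \<open>The bilinear form y^T M x, which equals (x^T (kron) y^T) vec(M) under column stacking.\<close>
definition bilin :: "complex^3 \<Rightarrow> complex^3^3 \<Rightarrow> complex^3 \<Rightarrow> complex" where
  "bilin y M x = (\<Sum>a\<in>UNIV. \<Sum>b\<in>UNIV. y $ a * M $ a $ b * x $ b)"

definition nullZ :: "nat \<Rightarrow> (nat \<Rightarrow> complex^3) \<Rightarrow> (nat \<Rightarrow> complex^3) \<Rightarrow> (complex^3^3) set" where
  "nullZ k x y = {M. \<forall>i<k. bilin (y i) M (x i) = 0}"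

text \<open>The projective line through the independent matrices A and B (affine cone: the complex span).\<close>
definition line_span :: "complex^3^3 \<Rightarrow> complex^3^3 \<Rightarrow> (complex^3^3) set" where
  "line_span A B = {smat a A + smat b B | a b. True}"

definition lin_indep2 :: "complex^3^3 \<Rightarrow> complex^3^3 \<Rightarrow> bool" where
  "lin_indep2 A B \<longleftrightarrow> (\<forall>a b. smat a A + smat b B = 0 \<longrightarrow> a = 0 \<and> b = 0)"

definition projpt :: "complex^3^3 \<Rightarrow> (complex^3^3) set" where
  "projpt M = {smat c M | c. c \<noteq> 0}"

definition rank2_points :: "complex^3^3 \<Rightarrow> complex^3^3 \<Rightarrow> (complex^3^3) set set" where
  "rank2_points A B = projpt ` {M \<in> line_span A B. M \<noteq> 0 \<and> rank M = 2}"

definition generic_line :: "complex^3^3 \<Rightarrow> complex^3^3 \<Rightarrow> bool" where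
  "generic_line A B \<longleftrightarrow> lin_indep2 A B \<and> finite (rank2_points A B) \<and> card (rank2_points A B) = 3"

end

(*
  If F has rank two and y^T F = 0, F x = 0, then its adjugate is a multiple of x y^T.  Hence
  the coefficient tr(adj F G) of s^2 t in the binary cubic det(s F + t G) is a multiple of
  y^T G x, which vanishes for every G in the nullspace.  So t = 0 is a double root: the line
  is tangent to the determinantal cubic at F.  Such a line either meets the cubic in at most
  two points, or lies in it, and then all but finitely many of its points have rank two
  because some 2x2 minor of F is nonzero.  In neither case does it carry exactly three
  rank-two points.
*)
theory Submission
  imports Defs
begin

definition cyc_succ :: "3 \<Rightarrow> 3" where "cyc_succ i = (if i = 1 then 2 else if i = 2 then 3 else 1)"
definition cyc_pred :: "3 \<Rightarrow> 3" where "cyc_pred i = (if i = 1 then 3 else if i = 2 then 1 else 2)"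
text \<open>With cyclic indices, cofactor M i j is the signed (i, j) cofactor, i.e. the (j, i) entry of
  the adjugate of M.\<close>
definition cofactor :: "complex^3^3 \<Rightarrow> 3 \<Rightarrow> 3 \<Rightarrow> complex" where
  "cofactor M i j = M$(cyc_succ i)$(cyc_succ j) * M$(cyc_pred i)$(cyc_pred j)
                  - M$(cyc_succ i)$(cyc_pred j) * M$(cyc_pred i)$(cyc_succ j)"

lemma cross_product_parallel:
  fixes u v x :: "3 \<Rightarrow> complex"
  assumes "u 1 * x 1 + u 2 * x 2 + u 3 * x 3 = 0" "v 1 * x 1 + v 2 * x 2 + v 3 * x 3 = 0"
  defines "w \<equiv> \<lambda>j. u (cyc_succ j) * v (cyc_pred j) - u (cyc_pred j) * v (cyc_succ j)"
  shows "w j * x c = w c * x j"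
proof -
  have "w 1 * x 2 = w 2 * x 1" "w 1 * x 3 = w 3 * x 1" "w 2 * x 3 = w 3 * x 2"
    using assms(1,2) unfolding w_def cyc_succ_def cyc_pred_def by simp_all algebra+
  then show ?thesis
    using exhaust_3[of j] exhaust_3[of c] by auto
qed

lemma cofactor_kernel:
  assumes "F *v x = 0" shows "cofactor F i j * x$c = cofactor F i c * x$j"
proof -
  have row: "F$r$1 * x$1 + F$r$2 * x$2 + F$r$3 * x$3 = 0" for r
    using assms by (simp add: vec_eq_iff matrix_vector_mult_def sum_3)
  show ?thesis
    unfolding cofactor_def
    by (rule cross_product_parallel[where u = "\<lambda>k. F$(cyc_succ i)$k" and v = "\<lambda>k. F$(cyc_pred i)$k"
          and x = "\<lambda>k. x$k", simplified, OF row row])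
qed

lemma cofactor_transpose: "cofactor (transpose F) j i = cofactor F i j"
  using exhaust_3[of i] exhaust_3[of j]
  by (elim disjE; simp add: cofactor_def cyc_succ_def cyc_pred_def transpose_def mult.commute)

lemma cofactor_cokernel:
  assumes "y v* F = 0" shows "cofactor F i j * y$d = cofactor F d j * y$i"
  using cofactor_kernel[of "transpose F" y j i d] assms by (simp add: cofactor_transpose)

lemma cofactor_rank_one:
  assumes "F *v x = 0" "y v* F = 0"
  shows "cofactor F i j * (x$c * y$d) = cofactor F d c * (y$i * x$j)"
proof -
  have "cofactor F i j * (x$c * y$d) = (cofactor F i j * x$c) * y$d"
    by (simp only: mult.assoc)
  also have "\<dots> = (cofactor F i c * y$d) * x$j"
    by (simp only: cofactor_kernel[OF assms(1)] mult.assoc mult.commute[of "x$j"])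
  also have "\<dots> = cofactor F d c * (y$i * x$j)"
    by (simp only: cofactor_cokernel[OF assms(2)] mult.assoc)
  finally show ?thesis .
qed

text \<open>The trace of adj(P) Q.\<close>
definition mixed_det :: "complex^3^3 \<Rightarrow> complex^3^3 \<Rightarrow> complex" where
  "mixed_det P Q = (\<Sum>i\<in>UNIV. \<Sum>j\<in>UNIV. cofactor P i j * Q$i$j)"

lemma smat_component [simp]: "smat c M $ i $ j = c * M $ i $ j"
  by (simp add: smat_def)

lemma det_pencil:
  "det (smat s F + smat t G) = s^3 * det F + s^2 * t * mixed_det F G + s * t^2 * mixed_det G F + t^3 * det G"
  by (simp add: det_3 mixed_det_def cofactor_def cyc_succ_def cyc_pred_def sum_3) algebra

lemma mixed_det_rank_one:
  assumes "F *v x = 0" "y v* F = 0"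
  shows "mixed_det F G * (x$c * y$d) = cofactor F d c * bilin y G x"
proof -
  have "mixed_det F G * (x$c * y$d) = (\<Sum>i\<in>UNIV. \<Sum>j\<in>UNIV. cofactor F i j * (x$c * y$d) * G$i$j)"
    unfolding mixed_det_def sum_distrib_right by (simp add: algebra_simps)
  also have "\<dots> = (\<Sum>i\<in>UNIV. \<Sum>j\<in>UNIV. cofactor F d c * (y$i * G$i$j * x$j))"
    unfolding cofactor_rank_one[OF assms] by (simp add: algebra_simps)
  also have "\<dots> = cofactor F d c * bilin y G x"
    unfolding bilin_def sum_distrib_left ..
  finally show ?thesis .
qed

lemma mixed_det_eq_0:
  assumes "F *v x = 0" "y v* F = 0" "x \<noteq> 0" "y \<noteq> 0" "bilin y G x = 0"
  shows "mixed_det F G = 0"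
proof -
  obtain c d where "x$c \<noteq> 0" "y$d \<noteq> 0"
    using assms(3,4) by (metis vec_eq_iff zero_index)
  then show ?thesis
    using mixed_det_rank_one[OF assms(1,2), of G c d] assms(5) by simp
qed

lemma rank_eq_3_iff: "rank (M::complex^3^3) = 3 \<longleftrightarrow> det M \<noteq> 0"
proof -
  have "rank M = 3 \<longleftrightarrow> vec.span (rows M) = UNIV"
    by (simp add: row_rank_def_gen vec.dim_eq_full[symmetric] vec.dimension_def card_cart_basis)
  also have "\<dots> \<longleftrightarrow> invertible M"
    by (simp add: invertible_left_inverse matrix_left_invertible_span_rows_gen)
  also have "\<dots> \<longleftrightarrow> det M \<noteq> 0"
    by (rule invertible_det_nz)
  finally show ?thesis .
qed

lemma rank_le_3: "rank (M::complex^3^3) \<le> 3"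
  unfolding row_rank_def_gen using dim_subset_UNIV_cart_gen[of "rows M"] by simp

lemma rank_ge_2_if_cofactor_nonzero:
  assumes "cofactor M i j \<noteq> 0" shows "rank M \<ge> 2"
proof -
  let ?u = "row (cyc_succ i) M" and ?v = "row (cyc_pred i) M"
  have minor: "cofactor M i j = ?u$(cyc_succ j) * ?v$(cyc_pred j) - ?u$(cyc_pred j) * ?v$(cyc_succ j)"
    by (simp add: cofactor_def row_def)
  have "?u \<noteq> ?v" "?v \<noteq> 0"
    using assms minor by (auto simp: mult.commute)
  moreover have "?u \<notin> vec.span {?v}"
  proof
    assume "?u \<in> vec.span {?v}"
    then obtain c where "?u = c *s ?v" by (auto simp: vec.span_singleton)
    then show False using assms minor by (simp add: algebra_simps)
  qed
  ultimately have "vec.independent {?u, ?v}"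
    by (simp add: vec.independent_insert)
  then have "card {?u, ?v} \<le> vec.dim (rows M)"
    by (intro vec.independent_card_le_dim) (auto simp: rows_def)
  then show ?thesis
    using \<open>?u \<noteq> ?v\<close> by (simp add: row_rank_def_gen)
qed

lemma minor_eq_0_if_cofactors_eq_0:
  assumes "\<forall>a b. cofactor M a b = 0" shows "M$i$j * M$p$q = M$i$q * M$p$j"
proof -
  have e: "M$(cyc_succ a)$(cyc_succ b) * M$(cyc_pred a)$(cyc_pred b)
      = M$(cyc_succ a)$(cyc_pred b) * M$(cyc_pred a)$(cyc_succ b)" for a b
    using assms unfolding cofactor_def by simp
  note minors = e[of 1 1] e[of 1 2] e[of 1 3] e[of 2 1] e[of 2 2] e[of 2 3] e[of 3 1] e[of 3 2] e[of 3 3]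
  show ?thesis
    using exhaust_3[of i] exhaust_3[of j] exhaust_3[of p] exhaust_3[of q]
    by (elim disjE; hypsubst; (simp add: mult.commute; fail)?;
        metis minors[unfolded cyc_succ_def cyc_pred_def, simplified] mult.commute)
qed

lemma rank_le_1_if_cofactors_eq_0:
  assumes "\<forall>a b. cofactor M a b = 0" shows "rank M \<le> 1"
proof (cases "M = 0")
  case True
  then have "rows M \<subseteq> vec.span {0}"
    by (auto simp: rows_def row_def vec_eq_iff vec.span_base)
  then have "vec.dim (rows M) \<le> card {0::complex^3}"
    by (intro vec.dim_le_card) auto
  then show ?thesis by (simp add: row_rank_def_gen)
next
  case False
  then obtain p q where pq: "M$p$q \<noteq> 0" by (metis vec_eq_iff zero_index)
  have "rows M \<subseteq> vec.span {row p M}"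
  proof
    fix r assume "r \<in> rows M"
    then obtain i where r: "r = row i M" by (auto simp: rows_def)
    have "r = (M$i$q / M$p$q) *s row p M"
      unfolding r vec_eq_iff using minor_eq_0_if_cofactors_eq_0[OF assms, of i _ p q] pq
      by (auto simp: row_def field_simps)
    then show "r \<in> vec.span {row p M}" by (auto simp: vec.span_singleton)
  qed
  then have "vec.dim (rows M) \<le> card {row p M}"
    by (intro vec.dim_le_card) auto
  then show ?thesis by (simp add: row_rank_def_gen)
qed

lemma rank_eq_2_iff: "rank M = 2 \<longleftrightarrow> det M = 0 \<and> (\<exists>a b. cofactor M a b \<noteq> 0)"
proof
  assume "rank M = 2"
  then show "det M = 0 \<and> (\<exists>a b. cofactor M a b \<noteq> 0)"
    using rank_eq_3_iff[of M] rank_le_1_if_cofactors_eq_0[of M] by auto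
next
  assume "det M = 0 \<and> (\<exists>a b. cofactor M a b \<noteq> 0)"
  then show "rank M = 2"
    using rank_eq_3_iff[of M] rank_le_3[of M] rank_ge_2_if_cofactor_nonzero[of M] by fastforce
qed

lemma smat_one [simp]: "smat 1 M = M"
  by (simp add: vec_eq_iff)

lemma smat_smat: "smat a (smat b M) = smat (a * b) M"
  by (simp add: vec_eq_iff)

lemma projpt_smat: "c \<noteq> 0 \<Longrightarrow> projpt (smat c M) = projpt M"
  unfolding projpt_def
proof safe
  fix d :: complex assume "c \<noteq> 0" "d \<noteq> 0"
  then show "\<exists>e. smat d (smat c M) = smat e M \<and> e \<noteq> 0"
    by (intro exI[of _ "d * c"]) (simp add: smat_smat)
  show "\<exists>e. smat d M = smat e (smat c M) \<and> e \<noteq> 0"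
    using \<open>c \<noteq> 0\<close> \<open>d \<noteq> 0\<close> by (intro exI[of _ "d / c"]) (simp add: smat_smat)
qed

lemma projpt_self: "M \<in> projpt M"
  unfolding projpt_def by (rule CollectI, rule exI[of _ 1]) (simp add: vec_eq_iff)

lemma pencil_in_line_span: "F + smat u G \<in> line_span F G"
  unfolding line_span_def by (rule CollectI, intro exI[of _ 1] exI[of _ u]) (simp add: vec_eq_iff)

lemma right_mem_line_span: "B \<in> line_span A B"
  unfolding line_span_def by (rule CollectI, intro exI[of _ 0] exI[of _ 1]) (simp add: vec_eq_iff)

lemma inj_projpt_pencil:
  assumes "lin_indep2 F G" shows "inj (\<lambda>u. projpt (F + smat u G))"
proof
  fix u v assume "projpt (F + smat u G) = projpt (F + smat v G)"
  then obtain e where "F + smat u G = smat e (F + smat v G)"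
    using projpt_self[of "F + smat u G"] unfolding projpt_def by auto
  then have "smat (1 - e) F + smat (u - e * v) G = 0"
    by (simp add: vec_eq_iff algebra_simps)
  then have "1 - e = 0" "u - e * v = 0"
    using assms unfolding lin_indep2_def by blast+
  then show "u = v" by simp
qed

lemma finite_cofactor_pencil_zeros:
  assumes "cofactor F a b \<noteq> 0"
  shows "finite {u. cofactor (F + smat u G) a b = 0}"
proof -
  define p where "p = [:cofactor F a b,
      F$(cyc_succ a)$(cyc_succ b) * G$(cyc_pred a)$(cyc_pred b)
    + G$(cyc_succ a)$(cyc_succ b) * F$(cyc_pred a)$(cyc_pred b)
    - F$(cyc_succ a)$(cyc_pred b) * G$(cyc_pred a)$(cyc_succ b)
    - G$(cyc_succ a)$(cyc_pred b) * F$(cyc_pred a)$(cyc_succ b), cofactor G a b:]"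
  have "cofactor (F + smat u G) a b = poly p u" for u
    unfolding p_def cofactor_def by simp algebra
  moreover have "p \<noteq> 0"
    using assms by (simp add: p_def)
  ultimately show ?thesis
    using poly_roots_finite[of p] by simp
qed

lemma infinite_rank2_points:
  assumes "lin_indep2 F G" "cofactor F a b \<noteq> 0" "\<And>u. det (F + smat u G) = 0"
  shows "infinite (rank2_points F G)"
proof -
  let ?U = "{u. cofactor (F + smat u G) a b \<noteq> 0}"
  have "UNIV = ?U \<union> {u. cofactor (F + smat u G) a b = 0}"
    by auto
  then have "infinite ?U"
    using finite_cofactor_pencil_zeros[OF assms(2), of G] infinite_UNIV_char_0[where 'a=complex]
    by (metis finite_Un)
  then have "infinite ((\<lambda>u. projpt (F + smat u G)) ` ?U)"
    using inj_projpt_pencil[OF assms(1)] by (simp add: finite_image_iff inj_on_subset)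
  moreover have "(\<lambda>u. projpt (F + smat u G)) ` ?U \<subseteq> rank2_points F G"
  proof clarify
    fix u assume cof: "cofactor (F + smat u G) a b \<noteq> 0"
    then have "rank (F + smat u G) = 2"
      using assms(3)[of u] by (auto simp: rank_eq_2_iff)
    moreover have "F + smat u G \<noteq> 0"
      using cof by (rule contrapos_nn) (simp add: cofactor_def)
    ultimately show "projpt (F + smat u G) \<in> rank2_points F G"
      unfolding rank2_points_def using pencil_in_line_span by blast
  qed
  ultimately show ?thesis
    using finite_subset by blast
qed

lemma rank2_points_subset_pair:
  assumes det: "\<And>s t. det (smat s F + smat t G) = t^2 * (s * c + t * d)" and cd: "c \<noteq> 0 \<or> d \<noteq> 0"
  shows "rank2_points F G \<subseteq> {projpt F, projpt (smat d F + smat (-c) G)}"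
proof
  fix P assume "P \<in> rank2_points F G"
  then obtain s t where P: "P = projpt (smat s F + smat t G)" and nz: "smat s F + smat t G \<noteq> 0"
    and "rank (smat s F + smat t G) = 2"
    unfolding rank2_points_def line_span_def by auto
  then have root: "t^2 * (s * c + t * d) = 0"
    using det rank_eq_2_iff by metis
  show "P \<in> {projpt F, projpt (smat d F + smat (-c) G)}"
  proof (cases "t = 0")
    case True
    then have "s \<noteq> 0" "smat s F + smat t G = smat s F"
      using nz by (auto simp: vec_eq_iff)
    then show ?thesis
      using P projpt_smat by simp
  next
    case False
    then have "s * c + t * d = 0"
      using root by simp
    moreover from this have "c \<noteq> 0"
      using cd False by auto
    ultimately have s: "s = - (t * d) / c"
      by (simp add: field_simps eq_neg_iff_add_eq_0)
    have "smat s F + smat t G = smat (- t / c) (smat d F + smat (-c) G)"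
      unfolding s using \<open>c \<noteq> 0\<close> by (simp add: vec_eq_iff field_simps)
    then show ?thesis
      using P projpt_smat False \<open>c \<noteq> 0\<close> by simp
  qed
qed

lemma not_generic_line_if_tangent:
  assumes indep: "lin_indep2 F G" and rank: "rank F = 2" and tangent: "mixed_det F G = 0"
  shows "\<not> generic_line F G"
proof -
  obtain a b where "det F = 0" and cof: "cofactor F a b \<noteq> 0"
    using rank rank_eq_2_iff by blast
  then have det: "det (smat s F + smat t G) = t^2 * (s * mixed_det G F + t * det G)" for s t
    using det_pencil[of s F t G] tangent by (simp add: power2_eq_square power3_eq_cube algebra_simps)
  show ?thesis
  proof (cases "mixed_det G F = 0 \<and> det G = 0")
    case True
    have "det (F + smat u G) = 0" for u
      using det[of 1 u] True by simp
    then show ?thesis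
      using infinite_rank2_points[OF indep cof] unfolding generic_line_def by blast
  next
    case False
    then have "card (rank2_points F G) \<le> card {projpt F, projpt (smat (det G) F + smat (- mixed_det G F) G)}"
      using rank2_points_subset_pair[OF det] by (intro card_mono) auto
    also have "\<dots> \<le> 2"
      by (simp add: card_insert_le_m1)
    finally show ?thesis
      unfolding generic_line_def by simp
  qed
qed

lemma line_span_change_basis:
  assumes indep: "lin_indep2 A B" and "a \<noteq> 0"
  shows "lin_indep2 (smat a A + smat b B) B" "line_span (smat a A + smat b B) B = line_span A B"
proof -
  show "lin_indep2 (smat a A + smat b B) B"
    unfolding lin_indep2_def
  proof (intro allI impI)
    fix s t assume "smat s (smat a A + smat b B) + smat t B = 0"
    then have "smat (s * a) A + smat (s * b + t) B = 0"
      by (simp add: vec_eq_iff algebra_simps)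
    then have "s * a = 0" "s * b + t = 0"
      using indep unfolding lin_indep2_def by blast+
    then show "s = 0 \<and> t = 0"
      using \<open>a \<noteq> 0\<close> by simp
  qed
  show "line_span (smat a A + smat b B) B = line_span A B"
    unfolding line_span_def
  proof safe
    fix s t
    show "\<exists>s' t'. smat s (smat a A + smat b B) + smat t B = smat s' A + smat t' B \<and> True"
      by (intro exI[of _ "s * a"] exI[of _ "s * b + t"]) (simp add: vec_eq_iff algebra_simps)
    show "\<exists>s' t'. smat s A + smat t B = smat s' (smat a A + smat b B) + smat t' B \<and> True"
      using \<open>a \<noteq> 0\<close> by (intro exI[of _ "s / a"] exI[of _ "t - s * b / a"]) (simp add: vec_eq_iff field_simps)
  qed
qed

lemma lin_indep2_swap: "lin_indep2 A B \<Longrightarrow> lin_indep2 B A"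
  unfolding lin_indep2_def by (metis add.commute)

lemma line_span_commute: "line_span A B = line_span B A"
  unfolding line_span_def by (metis add.commute)

lemma line_span_through_point:
  assumes indep: "lin_indep2 A B" and F: "F \<in> line_span A B" "F \<noteq> 0"
  obtains G where "lin_indep2 F G" "line_span F G = line_span A B"
proof -
  obtain a b where ab: "F = smat a A + smat b B"
    using F unfolding line_span_def by auto
  show ?thesis
  proof (cases "a = 0")
    case False
    then show ?thesis
      using that line_span_change_basis[OF indep False, of b] ab by blast
  next
    case True
    then have "b \<noteq> 0" "F = smat b B + smat a A"
      using F(2) ab by (auto simp: vec_eq_iff)
    then show ?thesis
      using that line_span_change_basis[OF lin_indep2_swap[OF indep] \<open>b \<noteq> 0\<close>, of a]
        line_span_commute by metis
  qed
qed

theorem mainTheorem15: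
  fixes k :: nat and x y :: "nat \<Rightarrow> complex^3" and A B :: "complex^3^3"
  assumes "\<forall>i<k. x i \<noteq> 0 \<and> y i \<noteq> 0"
    and "lin_indep2 A B"
    and "line_span A B \<subseteq> nullZ k x y"
    and "generic_line A B"
  shows "\<forall>F \<in> line_span A B. F \<noteq> 0 \<and> rank F = 2 \<longrightarrow>
           \<not> (\<exists>i<k. y i v* F = 0 \<and> F *v x i = 0)"
proof (intro ballI impI notI)
  fix F assume F: "F \<in> line_span A B" and rank: "F \<noteq> 0 \<and> rank F = 2"
    and "\<exists>i<k. y i v* F = 0 \<and> F *v x i = 0"
  then obtain i where i: "i < k" "y i v* F = 0" "F *v x i = 0"
    by blast
  obtain G where G: "lin_indep2 F G" "line_span F G = line_span A B"
    using line_span_through_point[OF assms(2) F] rank by blast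
  have "G \<in> nullZ k x y"
    using right_mem_line_span[of G F] assms(3) G(2) by blast
  then have "bilin (y i) G (x i) = 0"
    using i(1) unfolding nullZ_def by blast
  then have "mixed_det F G = 0"
    using mixed_det_eq_0 i assms(1) by blast
  moreover have "generic_line F G"
    using assms(4) G unfolding generic_line_def rank2_points_def by simp
  ultimately show False
    using not_generic_line_if_tangent G(1) rank by blast
qed

end
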